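(* Let $\mathbf X=(X_1,\dots,X_r)$ have the UGAT distribution with parameters $n,k,\beta,\overline{\alpha}_r$, with hazard rate components $h_i$ as defined below. Abbreviate $M(\gamma)=M^{(r)}_n(\gamma;k;\overline{\alpha}_r)$, and for $\mathbf x,\mathbf t\in\mathbb N_0^r$ write $X_{\mathbf x}=x_1+\cdots+x_r$, $X'_{\mathbf x}=X_{\mathbf x}+1$ and $T_{\mathbf t}=t_1+\cdots+t_r$. Then the UGAT distribution is MIFR if and only if for all $\mathbf x,\mathbf t\in\mathbb N_0^r$ $$\frac{M(\beta+X'_{\mathbf x}+T_{\mathbf t})}{M(\beta+X_{\mathbf x}+T_{\mathbf t})}\le\frac{M(\beta+X'_{\mathbf x})}{M(\beta+X_{\mathbf x})},$$ and it is MDFR if and only if the reverse inequality $\ge$ holds for all $\mathbf x,\mathbf t\in\mathbb N_0^r$.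
   Context: Fix integers $r\ge1$, $n\ge0$, a real number $k$ with $rk>n$, a real $\beta>0$ and $\overline{\alpha}_r=(\alpha_0,\dots,\alpha_{r-1})\in(0,\infty)^r$. For $\gamma>0$ and a vector $\overline{\alpha}'=(\alpha'_0,\dots,\alpha'_{r-1})$ of positive reals define $$M^{(r)}_n(\gamma;k;\overline{\alpha}')=C\sum_{\ell_1,\dots,\ell_r=0}^{\infty}\frac{(\alpha'_0)^{\ell_1}(\alpha'_1)^{\ell_2}\cdots(\alpha'_{r-1})^{\ell_r}}{(\ell_1+\cdots+\ell_r+\gamma)^{rk-n}},\qquad C=\frac{(-1)^r2^{r(1-k)}n!}{(n-rk)!},$$ where $C$ is regarded as a fixed nonzero real constant not depending on $\gamma$ or $\overline{\alpha}'$, and the parameters are assumed to be such that all series involved converge (e.g. all $\alpha_j<1$). A random vector $\mathbf X=(X_1,\dots,X_r)$ with values in $\mathbb N_0^r$ has the UGAT distribution with parameters $n,k,\beta,\overline{\alpha}_r$ if for all $x_1,\dots,x_r\in\mathbb N_0$ $$P(X_1=x_1,\dots,X_r=x_r)=\frac{C\,\alpha_0^{x_1}\alpha_1^{x_2}\cdots\alpha_{r-1}^{x_r}}{(x_1+\cdots+x_r+\beta)^{rk-n}\,M^{(r)}_n(\beta;k;\overline{\alpha}_r)}.$$ With $R(x_1,\dots,x_r)=P(X_1\ge x_1,\dots,X_r\ge x_r)$, the hazard rate components are $h_i(\mathbf x)=1-R(x_1,\dots,x_i+1,\dots,x_r)/R(x_1,\dots,x_r)$, $i=1,\dots,r$.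 The distribution is MIFR (multivariate increasing failure rate) if $h_i(\mathbf x+\mathbf t)\ge h_i(\mathbf x)$ for all $i$ and all $\mathbf x,\mathbf t\in\mathbb N_0^r$, and MDFR (multivariate decreasing failure rate) if $h_i(\mathbf x+\mathbf t)\le h_i(\mathbf x)$ for all $i$ and all $\mathbf x,\mathbf t\in\mathbb N_0^r$. *)

theory Defs
  imports "HOL-Analysis.Analysis"
begin

text \<open>Vectors in N_0^r are modelled as nat^'r with r = CARD('r) (so r >= 1 automatically).
  The parameter vector (alpha_0,...,alpha_{r-1}) is a real^'r.  The constant C is a parameter.\<close>

definition vsum :: "nat^'r::finite \<Rightarrow> nat" where
  "vsum x = (\<Sum>j\<in>UNIV. x $ j)"

definition ugat_term :: "real \<Rightarrow> nat \<Rightarrow> real \<Rightarrow> real^'r::finite \<Rightarrow> nat^'r \<Rightarrow> real" where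
  "ugat_term k n \<gamma> \<alpha>' l =
     (\<Prod>j\<in>UNIV. (\<alpha>' $ j) ^ (l $ j)) / (real (vsum l) + \<gamma>) powr (real CARD('r) * k - real n)"

text \<open>M^{(r)}_n(gamma;k;alpha') including the constant C.\<close>
definition ugat_M :: "real \<Rightarrow> nat \<Rightarrow> real \<Rightarrow> real \<Rightarrow> real^'r::finite \<Rightarrow> real" where
  "ugat_M C n k \<gamma> \<alpha>' = C * (\<Sum>\<^sub>\<infinity>l\<in>(UNIV :: (nat^'r) set). ugat_term k n \<gamma> \<alpha>' l)"

definition ugat_pmf :: "real \<Rightarrow> nat \<Rightarrow> real \<Rightarrow> real \<Rightarrow> real^'r::finite \<Rightarrow> nat^'r \<Rightarrow> real" where
  "ugat_pmf C n k \<beta> \<alpha> x = C * ugat_term k n \<beta> \<alpha> x / ugat_M C n k \<beta> \<alpha>"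

definition ugat_R :: "real \<Rightarrow> nat \<Rightarrow> real \<Rightarrow> real \<Rightarrow> real^'r::finite \<Rightarrow> nat^'r \<Rightarrow> real" where
  "ugat_R C n k \<beta> \<alpha> x = (\<Sum>\<^sub>\<infinity>y\<in>{y. \<forall>j. x $ j \<le> y $ j}. ugat_pmf C n k \<beta> \<alpha> y)"

definition incr_at :: "'r::finite \<Rightarrow> nat^'r \<Rightarrow> nat^'r" where
  "incr_at i x = (\<chi> j. if j = i then x $ j + 1 else x $ j)"

definition ugat_h :: "real \<Rightarrow> nat \<Rightarrow> real \<Rightarrow> real \<Rightarrow> real^'r::finite \<Rightarrow> 'r \<Rightarrow> nat^'r \<Rightarrow> real" where
  "ugat_h C n k \<beta> \<alpha> i x = 1 - ugat_R C n k \<beta> \<alpha> (incr_at i x) / ugat_R C n k \<beta> \<alpha> x"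

definition MIFR :: "('r::finite \<Rightarrow> nat^'r \<Rightarrow> real) \<Rightarrow> bool" where
  "MIFR h \<longleftrightarrow> (\<forall>i x t. h i (x + t) \<ge> h i x)"

definition MDFR :: "('r::finite \<Rightarrow> nat^'r \<Rightarrow> real) \<Rightarrow> bool" where
  "MDFR h \<longleftrightarrow> (\<forall>i x t. h i (x + t) \<le> h i x)"

end

theory Submission
  imports Defs
begin

text \<open>Shifting the summation index by \<open>x\<close> gives
  \<open>R(x) = \<alpha>\<^sup>x M(\<beta> + X\<^sub>x) / M(\<beta>)\<close>, so
  \<open>h\<^sub>i(x) = 1 - \<alpha>\<^sub>i M(\<beta> + X\<^sub>x + 1) / M(\<beta> + X\<^sub>x)\<close>
  depends on \<open>x\<close> only through \<open>X\<^sub>x\<close>, and \<open>X\<^sub>x\<^sub>+\<^sub>t = X\<^sub>x + T\<^sub>t\<close>.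
  Since \<open>\<alpha>\<^sub>i > 0\<close>, each \<open>h\<^sub>i\<close> increases (decreases) along
  \<open>x \<mapsto> x + t\<close> exactly when the ratio \<open>M(\<gamma> + 1) / M(\<gamma>)\<close> decreases (increases).\<close>

definition multi_power :: "real^'r::finite \<Rightarrow> nat^'r \<Rightarrow> real" where
  "multi_power \<alpha> x = (\<Prod>j\<in>UNIV. \<alpha> $ j ^ x $ j)"

lemma vsum_add: "vsum (x + y) = vsum x + vsum y"
  by (simp add: vsum_def sum.distrib)

lemma vsum_incr_at: "vsum (incr_at i x) = vsum x + 1"
proof -
  have "vsum (incr_at i x) = (\<Sum>j\<in>UNIV. x $ j + (if j = i then 1 else 0))"
    unfolding vsum_def incr_at_def by (intro sum.cong) auto
  then show ?thesis
    by (simp add: sum.distrib vsum_def)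
qed

lemma multi_power_add: "multi_power \<alpha> (x + y) = multi_power \<alpha> x * multi_power \<alpha> y"
  by (simp add: multi_power_def power_add prod.distrib)

lemma multi_power_incr_at: "multi_power \<alpha> (incr_at i x) = \<alpha> $ i * multi_power \<alpha> x"
proof -
  have "multi_power \<alpha> (incr_at i x) = (\<Prod>j\<in>UNIV. \<alpha> $ j ^ x $ j * (if j = i then \<alpha> $ j else 1))"
    unfolding multi_power_def incr_at_def by (intro prod.cong) auto
  then show ?thesis
    by (simp add: prod.distrib multi_power_def)
qed

lemma multi_power_pos: "(\<And>j. \<alpha> $ j > 0) \<Longrightarrow> multi_power \<alpha> x > 0"
  unfolding multi_power_def by (intro prod_pos) auto

lemma infsum_pos:
  fixes f :: "'a \<Rightarrow> real"
  assumes "f summable_on A" and "\<And>x. x \<in> A \<Longrightarrow> f x > 0" and "a \<in> A"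
  shows "infsum f A > 0"
proof (rule ccontr)
  assume "\<not> infsum f A > 0"
  then have "f a = 0"
    using assms by (intro nonneg_infsum_le_0D[of f A]) (auto intro: less_imp_le)
  with assms show False
    by (metis less_irrefl)
qed

lemma ugat_term_eq:
  "ugat_term k n \<gamma> \<alpha> l = multi_power \<alpha> l / (real (vsum l) + \<gamma>) powr (real CARD('r) * k - real n)"
  for l :: "nat^'r::finite"
  by (simp add: ugat_term_def multi_power_def)

lemma ugat_term_pos:
  assumes "\<And>j. \<alpha> $ j > 0" and "\<gamma> > 0"
  shows "ugat_term k n \<gamma> \<alpha> l > 0"
  using assms by (simp add: ugat_term_eq multi_power_pos)

lemma ugat_term_add:
  "ugat_term k n \<beta> \<alpha> (x + l) = multi_power \<alpha> x * ugat_term k n (\<beta> + real (vsum x)) \<alpha> l"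
proof -
  have "real (vsum (x + l)) + \<beta> = real (vsum l) + (\<beta> + real (vsum x))"
    by (simp add: vsum_add)
  then show ?thesis
    by (simp add: ugat_term_eq multi_power_add add_ac)
qed

lemma ugat_M_nonzero:
  assumes "C \<noteq> 0" and "\<And>j. \<alpha> $ j > 0" and "\<gamma> > 0"
    and "ugat_term k n \<gamma> \<alpha> summable_on (UNIV :: (nat^'r::finite) set)"
  shows "ugat_M C n k \<gamma> (\<alpha> :: real^'r) \<noteq> 0"
proof -
  have "(\<Sum>\<^sub>\<infinity>l\<in>(UNIV :: (nat^'r) set). ugat_term k n \<gamma> \<alpha> l) > 0"
    using assms(4) by (rule infsum_pos) (auto intro: ugat_term_pos assms(2,3))
  with assms(1) show ?thesis
    by (simp add: ugat_M_def)
qed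

lemma range_vec_add_nat: "range ((+) x) = {y :: nat^'r::finite. \<forall>j. x $ j \<le> y $ j}"
proof (intro set_eqI iffI)
  fix y :: "nat^'r"
  assume "y \<in> {y. \<forall>j. x $ j \<le> y $ j}"
  then have "y = x + (\<chi> j. y $ j - x $ j)"
    by (simp add: vec_eq_iff)
  then show "y \<in> range ((+) x)"
    by blast
qed auto

lemma ugat_R_eq:
  "ugat_R C n k \<beta> \<alpha> x = multi_power \<alpha> x * ugat_M C n k (\<beta> + real (vsum x)) \<alpha> / ugat_M C n k \<beta> \<alpha>"
proof -
  have "ugat_R C n k \<beta> \<alpha> x = (\<Sum>\<^sub>\<infinity>l\<in>UNIV. ugat_pmf C n k \<beta> \<alpha> (x + l))"
    unfolding ugat_R_def range_vec_add_nat[symmetric]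
    by (simp add: infsum_reindex inj_on_def o_def)
  also have "\<dots> = (\<Sum>\<^sub>\<infinity>l\<in>UNIV. multi_power \<alpha> x * C / ugat_M C n k \<beta> \<alpha>
                                   * ugat_term k n (\<beta> + real (vsum x)) \<alpha> l)"
    by (simp add: ugat_pmf_def ugat_term_add mult_ac)
  also have "\<dots> = multi_power \<alpha> x * ugat_M C n k (\<beta> + real (vsum x)) \<alpha> / ugat_M C n k \<beta> \<alpha>"
    by (simp add: infsum_cmult_right' ugat_M_def)
  finally show ?thesis .
qed

lemma ugat_h_eq:
  assumes "C \<noteq> 0" and "\<beta> > 0" and "\<And>j. \<alpha> $ j > 0"
    and "\<And>\<gamma>. \<gamma> > 0 \<Longrightarrow> ugat_term k n \<gamma> \<alpha> summable_on (UNIV :: (nat^'r::finite) set)"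
  shows "ugat_h C n k \<beta> (\<alpha> :: real^'r) i x
           = 1 - \<alpha> $ i * (ugat_M C n k (\<beta> + real (vsum x + 1)) \<alpha> / ugat_M C n k (\<beta> + real (vsum x)) \<alpha>)"
proof -
  have "multi_power \<alpha> x > 0"
    using assms(3) by (rule multi_power_pos)
  moreover have "ugat_M C n k \<gamma> \<alpha> \<noteq> 0" if "\<gamma> > 0" for \<gamma>
    using ugat_M_nonzero[OF assms(1,3) that assms(4)[OF that]] .
  ultimately show ?thesis
    unfolding ugat_h_def ugat_R_eq multi_power_incr_at vsum_incr_at
    using assms(2) by (simp add: field_simps)
qed

lemma MIFR_iff_antitone:
  assumes "\<And>i x. h i x = 1 - c i * q x" and "\<And>i. c i > 0"
  shows "MIFR h \<longleftrightarrow> (\<forall>x t. q (x + t) \<le> q x)"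
proof -
  have "h i (x + t) \<ge> h i x \<longleftrightarrow> q (x + t) \<le> q x" for i x t
    using assms(2)[of i] by (simp add: assms(1))
  then show ?thesis
    unfolding MIFR_def by blast
qed

lemma MDFR_iff_monotone:
  assumes "\<And>i x. h i x = 1 - c i * q x" and "\<And>i. c i > 0"
  shows "MDFR h \<longleftrightarrow> (\<forall>x t. q x \<le> q (x + t))"
proof -
  have "h i (x + t) \<le> h i x \<longleftrightarrow> q x \<le> q (x + t)" for i x t
    using assms(2)[of i] by (simp add: assms(1))
  then show ?thesis
    unfolding MDFR_def by blast
qed

theorem mainTheorem10:
  fixes C k \<beta> :: real and n :: nat and \<alpha> :: "real^'r::finite"
  assumes "C \<noteq> 0"
    and "real CARD('r) * k > real n"
    and "\<beta> > 0"
    and "\<forall>j. \<alpha> $ j > 0"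
    and "\<forall>\<gamma>>0. ugat_term k n \<gamma> \<alpha> summable_on (UNIV :: (nat^'r) set)"
  shows "(MIFR (ugat_h C n k \<beta> \<alpha>) \<longleftrightarrow>
            (\<forall>(x::nat^'r) (t::nat^'r).
               ugat_M C n k (\<beta> + real (vsum x + 1 + vsum t)) \<alpha> / ugat_M C n k (\<beta> + real (vsum x + vsum t)) \<alpha>
               \<le> ugat_M C n k (\<beta> + real (vsum x + 1)) \<alpha> / ugat_M C n k (\<beta> + real (vsum x)) \<alpha>))
       \<and> (MDFR (ugat_h C n k \<beta> \<alpha>) \<longleftrightarrow>
            (\<forall>(x::nat^'r) (t::nat^'r).
               ugat_M C n k (\<beta> + real (vsum x + 1 + vsum t)) \<alpha> / ugat_M C n k (\<beta> + real (vsum x + vsum t)) \<alpha>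
               \<ge> ugat_M C n k (\<beta> + real (vsum x + 1)) \<alpha> / ugat_M C n k (\<beta> + real (vsum x)) \<alpha>))"
proof -
  define q where "q x = ugat_M C n k (\<beta> + real (vsum x + 1)) \<alpha> / ugat_M C n k (\<beta> + real (vsum x)) \<alpha>"
    for x :: "nat^'r"
  have h: "ugat_h C n k \<beta> \<alpha> i x = 1 - \<alpha> $ i * q x" for i x
    unfolding q_def using assms(1,3-5) by (intro ugat_h_eq) auto
  have shifted: "ugat_M C n k (\<beta> + real (vsum x + 1 + vsum t)) \<alpha>
                 / ugat_M C n k (\<beta> + real (vsum x + vsum t)) \<alpha> = q (x + t)" for x t
    by (simp add: q_def vsum_add add_ac)
  show ?thesis
    unfolding shifted q_def[symmetric]
    using MIFR_iff_antitone[of _ "\<lambda>i. \<alpha> $ i", OF h] MDFR_iff_monotone[of _ "\<lambda>i. \<alpha> $ i", OF h] assms(4)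
    by simp
qed

end
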